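(* Let $\gamma:S^n\to\mathbb{R}_+$ be continuous and set $\widetilde W=\alpha_N^{-1}\circ Id(\mathcal{W}_\gamma)\subset S^{n+1}$. Then $\widetilde W=\widetilde W^{\circ}$ if and only if $\widetilde W$ is of constant width $\pi/2$.
   Context: $\mathcal{W}_\gamma=\bigcap_{\theta\in S^n}\{x\in\mathbb{R}^{n+1}: x\cdot\theta\le\gamma(\theta)\}$ is the Wulff shape of $\gamma$. $N=(0,\dots,0,1)\in S^{n+1}$, $Id(x)=(x,1)$, and $\alpha_N(P_1,\dots,P_{n+2})=(P_1/P_{n+2},\dots,P_{n+1}/P_{n+2},1)$ on $\{P\in S^{n+1}:P_{n+2}>0\}$ (central projection). For $P\in S^{n+1}$, $H(P)=\{Q\in S^{n+1}:P\cdot Q\ge0\}$. The spherical polar set of $\widetilde W\subset S^{n+1}$ is $\widetilde W^\circ=\bigcap_{P\in\widetilde W}H(P)$. $|PQ|=\arccos(P\cdot Q)$. $H(P)$ supports a spherical convex body $\widetilde W$ if $\widetilde W\subset H(P)$ and $\partial\widetilde W\cap\partial H(P)\ne\emptyset$. The lune $H(P)\cap H(Q)$ ($P\ne\pm Q$) has thickness $\pi-|PQ|$. For $H(P)$ supporting $\widetilde W$, $\mathrm{width}_{H(P)}\widetilde W$ is the minimum thickness of lunes $H(P)\cap H(Q)\supset\widetilde W$ with $H(Q)$ supporting $\widetilde W$; $\widetilde W$ is of constant width $\rho$ if this equals $\rho$ for every supporting hemisphere $H(P)$. *)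

theory Defs
  imports "HOL-Analysis.Analysis"
begin

text \<open>R^{n+1} is modelled by a Euclidean space 'a, R^{n+2} by 'a \<times> real.
  S^n = sphere (0::'a) 1, S^{n+1} = sphere (0::'a\<times>real) 1.\<close>

definition wulff_shape :: "('a::euclidean_space \<Rightarrow> real) \<Rightarrow> 'a set" where
  "wulff_shape \<gamma> = (\<Inter>\<theta>\<in>sphere 0 1. {x. x \<bullet> \<theta> \<le> \<gamma> \<theta>})"

definition Id_lift :: "'a::euclidean_space \<Rightarrow> 'a \<times> real" where
  "Id_lift x = (x, 1)"

text \<open>Central projection alpha_N, meaningful on the open upper hemisphere snd P > 0.\<close>
definition alpha_N :: "'a::euclidean_space \<times> real \<Rightarrow> 'a \<times> real" where
  "alpha_N P = ((1 / snd P) *\<^sub>R fst P, 1)"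

definition alpha_N_inv_image :: "('a::euclidean_space \<times> real) set \<Rightarrow> ('a \<times> real) set" where
  "alpha_N_inv_image A = {P \<in> sphere 0 1. snd P > 0 \<and> alpha_N P \<in> A}"

definition hemi :: "'b::real_inner \<Rightarrow> 'b set" where
  "hemi P = {Q \<in> sphere 0 1. P \<bullet> Q \<ge> 0}"

definition sph_polar :: "'b::real_inner set \<Rightarrow> 'b set" where
  "sph_polar W = sphere 0 1 \<inter> (\<Inter>P\<in>W. hemi P)"

definition sph_dist :: "'b::real_inner \<Rightarrow> 'b \<Rightarrow> real" where
  "sph_dist P Q = arccos (P \<bullet> Q)"

definition supports :: "'b::real_inner \<Rightarrow> 'b set \<Rightarrow> bool" where
  "supports P W \<longleftrightarrow> P \<in> sphere 0 1 \<and> W \<subseteq> hemi P \<and>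
     (top_of_set (sphere 0 1) frontier_of W) \<inter> (top_of_set (sphere 0 1) frontier_of hemi P) \<noteq> {}"

definition lune_thickness :: "'b::real_inner \<Rightarrow> 'b \<Rightarrow> real" where
  "lune_thickness P Q = pi - sph_dist P Q"

definition sph_width :: "'b::real_inner \<Rightarrow> 'b set \<Rightarrow> real" where
  "sph_width P W = Inf {lune_thickness P Q | Q. Q \<noteq> P \<and> Q \<noteq> - P \<and> supports Q W \<and> W \<subseteq> hemi P \<inter> hemi Q}"

definition constant_width :: "'b::real_inner set \<Rightarrow> real \<Rightarrow> bool" where
  "constant_width W \<rho> \<longleftrightarrow> (\<forall>P. supports P W \<longrightarrow> sph_width P W = \<rho>)"

end

(*
  The lifted Wulff shape W is an intersection of closed hemispheres, so W equals its bipolar, and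
  both W and its polar W\<degree> lie in the open hemisphere centred at N = (0, 1); for W\<degree> this is
  because W contains a spherical cap around N.

  If W = W\<degree>, the pole P of a supporting hemisphere lies in W and touches W at a point X with
  P \<bullet> X = 0; X is itself a supporting pole, and every supporting pole Q has P \<bullet> Q \<ge> 0,
  so the width at P is exactly pi/2.

  Conversely, constant width pi/2 gives P \<bullet> Q \<ge> 0 for distinct, non-antipodal supporting poles.
  Rotating a pole of W\<degree> along a great circle until its hemisphere first supports W turns
  two points of W\<degree> with negative inner product into two such supporting poles, so W\<degree> is
  contained in its own polar, which is W. If some Y \<in> W lay outside W\<degree>, rotating N towards Y
  would give a supporting pole P with P \<bullet> Q > 0 on the compact set W\<degree>, and the width at P
  would exceed pi/2.
*)

theory Submission
  imports Defs
begin

lemma mem_sph_polar: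
  "Q \<in> sph_polar W \<longleftrightarrow> Q \<in> sphere 0 1 \<and> (\<forall>X\<in>W. 0 \<le> Q \<bullet> X)"
  by (auto simp: sph_polar_def hemi_def inner_commute)

lemma sph_polar_subset_sphere: "sph_polar W \<subseteq> sphere 0 1"
  by (auto simp: mem_sph_polar)

lemma sph_polar_antimono: "A \<subseteq> B \<Longrightarrow> sph_polar B \<subseteq> sph_polar A"
  by (auto simp: mem_sph_polar subset_iff)

lemma subset_sph_polar_sph_polar:
  "A \<subseteq> sphere 0 1 \<Longrightarrow> A \<subseteq> sph_polar (sph_polar A)"
  by (auto simp: mem_sph_polar subset_iff) (metis inner_commute)

lemma sph_polar_sph_polar_sph_polar:
  "A \<subseteq> sphere 0 1 \<Longrightarrow> sph_polar (sph_polar (sph_polar A)) = sph_polar A"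
  by (intro antisym sph_polar_antimono subset_sph_polar_sph_polar sph_polar_subset_sphere)

lemma compact_sph_polar:
  fixes W :: "'b::euclidean_space set"
  shows "compact (sph_polar W)"
proof -
  have "sph_polar W = sphere 0 1 \<inter> (\<Inter>X\<in>W. {Q. 0 \<le> Q \<bullet> X})"
    by (auto simp: mem_sph_polar)
  moreover have "closed (\<Inter>X\<in>W. {Q::'b. 0 \<le> Q \<bullet> X})"
    by (intro closed_INT ballI closed_Collect_le continuous_intros)
  ultimately show ?thesis by (simp add: compact_Int_closed)
qed

lemma not_in_interior_of_hemi:
  fixes P X :: "'b::euclidean_space"
  assumes "P \<in> sphere 0 1" and "X \<in> sphere 0 1" and "P \<bullet> X = 0" and "A \<subseteq> hemi P"
  shows "X \<notin> top_of_set (sphere 0 1) interior_of A"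
proof
  assume "X \<in> top_of_set (sphere 0 1) interior_of A"
  then obtain U where U: "open U" "X \<in> U" "sphere 0 1 \<inter> U \<subseteq> A"
    unfolding interior_of_def openin_open by blast
  have "((\<lambda>t. sgn (X - t *\<^sub>R P)) \<longlongrightarrow> sgn (X - 0 *\<^sub>R P)) (at_right 0)"
    using assms(2) by (intro tendsto_intros) auto
  hence "((\<lambda>t. sgn (X - t *\<^sub>R P)) \<longlongrightarrow> X) (at_right 0)"
    using assms(2) by (simp add: sgn_div_norm)
  hence "\<forall>\<^sub>F t in at_right 0. 0 < t \<and> sgn (X - t *\<^sub>R P) \<in> U"
    using U by (intro eventually_conj eventually_at_right_less topological_tendstoD) auto
  then obtain t :: real where t: "0 < t" "sgn (X - t *\<^sub>R P) \<in> U"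
    using eventually_happens trivial_limit_at_right_real by blast
  have "(X - t *\<^sub>R P) \<bullet> X = 1"
    using assms(2,3) by (simp add: inner_diff_left inner_commute[of P X] dot_square_norm)
  hence "X - t *\<^sub>R P \<noteq> 0" by auto
  hence "sgn (X - t *\<^sub>R P) \<in> sphere 0 1"
    by (simp add: norm_sgn)
  hence "sgn (X - t *\<^sub>R P) \<in> hemi P"
    using t U assms(4) by blast
  moreover have "P \<bullet> (X - t *\<^sub>R P) = - t"
    using assms(1,3) by (simp add: inner_diff_right dot_square_norm)
  ultimately show False
    using t(1) \<open>X - t *\<^sub>R P \<noteq> 0\<close> by (simp add: hemi_def sgn_div_norm mult_le_0_iff)
qed

lemma supports_iff:
  fixes W :: "'b::euclidean_space set"
  assumes "closed W" and "W \<subseteq> sphere 0 1"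
  shows "supports P W \<longleftrightarrow> P \<in> sph_polar W \<and> (\<exists>X\<in>W. P \<bullet> X = 0)"
proof
  assume supp: "supports P W"
  hence P: "P \<in> sphere 0 1" and WP: "W \<subseteq> hemi P"
    by (auto simp: supports_def)
  then have polar: "P \<in> sph_polar W"
    by (auto simp: mem_sph_polar hemi_def)
  obtain Y where Y_W: "Y \<in> top_of_set (sphere 0 1) frontier_of W"
    and Y_hemi: "Y \<in> top_of_set (sphere 0 1) frontier_of hemi P"
    using supp by (auto simp: supports_def)
  have "closedin (top_of_set (sphere 0 1)) W"
    using assms by (simp add: closed_subset)
  hence "Y \<in> W"
    using Y_W frontier_of_subset_closedin by blast
  moreover have "\<not> 0 < P \<bullet> Y"
  proof
    assume "0 < P \<bullet> Y"
    moreover have "openin (top_of_set (sphere 0 1)) (sphere 0 1 \<inter> {Q. 0 < P \<bullet> Q})"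
      by (simp add: openin_open_Int open_halfspace_gt)
    moreover have "sphere 0 1 \<inter> {Q. 0 < P \<bullet> Q} \<subseteq> hemi P"
      by (auto simp: hemi_def)
    ultimately have "Y \<in> top_of_set (sphere 0 1) interior_of hemi P"
      using \<open>Y \<in> W\<close> assms(2) unfolding interior_of_def by blast
    thus False
      using Y_hemi by (simp add: frontier_of_def)
  qed
  ultimately show "P \<in> sph_polar W \<and> (\<exists>X\<in>W. P \<bullet> X = 0)"
    using polar by (force simp: mem_sph_polar)
next
  assume "P \<in> sph_polar W \<and> (\<exists>X\<in>W. P \<bullet> X = 0)"
  then obtain X where P: "P \<in> sphere 0 1" and WP: "W \<subseteq> hemi P" and X: "X \<in> W" "P \<bullet> X = 0"
    using assms(2) by (auto simp: mem_sph_polar hemi_def subset_iff)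
  have X_sphere: "X \<in> sphere 0 1"
    using X assms(2) by auto
  have "X \<in> top_of_set (sphere 0 1) frontier_of W"
    using X_sphere X(1) closure_of_subset[of W "top_of_set (sphere 0 1)"] assms(2)
      not_in_interior_of_hemi[OF P X_sphere X(2) WP]
    by (auto simp: frontier_of_def)
  moreover have "X \<in> top_of_set (sphere 0 1) frontier_of hemi P"
  proof -
    have "hemi P \<subseteq> topspace (top_of_set (sphere 0 1))" and "X \<in> hemi P"
      using X_sphere X(2) by (auto simp: hemi_def)
    then have "X \<in> top_of_set (sphere 0 1) closure_of hemi P"
      using closure_of_subset by blast
    then show ?thesis
      using not_in_interior_of_hemi[OF P X_sphere X(2) order_refl]
      by (simp add: frontier_of_def)
  qed
  ultimately show "supports P W"
    using P WP by (auto simp: supports_def)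
qed

lemma inner_unit_bounds:
  fixes P Q :: "'b::real_inner"
  assumes "P \<in> sphere 0 1" and "Q \<in> sphere 0 1"
  shows "-1 \<le> P \<bullet> Q" and "P \<bullet> Q \<le> 1"
  using Cauchy_Schwarz_ineq2[of P Q] assms by auto

lemma sph_width_le_lune_thickness:
  assumes "supports P W" and "supports Q W" and "Q \<noteq> P" and "Q \<noteq> - P"
  shows "sph_width P W \<le> lune_thickness P Q"
  unfolding sph_width_def
proof (rule cInf_lower)
  show "lune_thickness P Q \<in> {lune_thickness P Q |Q. Q \<noteq> P \<and> Q \<noteq> - P \<and> supports Q W \<and> W \<subseteq> hemi P \<inter> hemi Q}"
    using assms by (auto simp: supports_def)
  show "bdd_below {lune_thickness P Q |Q. Q \<noteq> P \<and> Q \<noteq> - P \<and> supports Q W \<and> W \<subseteq> hemi P \<inter> hemi Q}"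
  proof (rule bdd_belowI[of _ 0])
    fix t assume "t \<in> {lune_thickness P Q |Q. Q \<noteq> P \<and> Q \<noteq> - P \<and> supports Q W \<and> W \<subseteq> hemi P \<inter> hemi Q}"
    then obtain R where "t = lune_thickness P R" and "supports R W"
      by blast
    with assms(1) show "0 \<le> t"
      using inner_unit_bounds[of P R] arccos_ubound[of "P \<bullet> R"]
      by (simp add: supports_def lune_thickness_def sph_dist_def)
  qed
qed

lemma sph_width_ge:
  assumes "supports P W" and "supports Q W" and "Q \<noteq> P" and "Q \<noteq> - P"
    and "-1 \<le> c" and "\<And>R. supports R W \<Longrightarrow> c \<le> P \<bullet> R"
  shows "pi - arccos c \<le> sph_width P W"
  unfolding sph_width_def
proof (rule cInf_greatest)
  show "{lune_thickness P Q |Q. Q \<noteq> P \<and> Q \<noteq> - P \<and> supports Q W \<and> W \<subseteq> hemi P \<inter> hemi Q} \<noteq> {}"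
    using assms(1-4) by (auto simp: supports_def)
next
  fix t assume "t \<in> {lune_thickness P Q |Q. Q \<noteq> P \<and> Q \<noteq> - P \<and> supports Q W \<and> W \<subseteq> hemi P \<inter> hemi Q}"
  then obtain R where t: "t = lune_thickness P R" and R: "supports R W"
    by blast
  have "P \<bullet> R \<le> 1"
    using R assms(1) inner_unit_bounds by (auto simp: supports_def)
  hence "arccos (P \<bullet> R) \<le> arccos c"
    using assms(5) assms(6)[OF R] by (intro arccos_le_arccos) auto
  thus "pi - arccos c \<le> t"
    by (simp add: t lune_thickness_def sph_dist_def)
qed

lemma constant_width_half_pi_imp_inner_nonneg:
  assumes "constant_width W (pi / 2)" and "supports P W" and "supports Q W"
    and "Q \<noteq> P" and "Q \<noteq> - P"
  shows "0 \<le> P \<bullet> Q"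
proof (rule ccontr)
  assume "\<not> 0 \<le> P \<bullet> Q"
  moreover have "-1 \<le> P \<bullet> Q"
    using assms(2,3) inner_unit_bounds by (auto simp: supports_def)
  ultimately have "arccos 0 < arccos (P \<bullet> Q)"
    by (intro arccos_less_arccos) auto
  moreover have "pi / 2 \<le> lune_thickness P Q"
    using sph_width_le_lune_thickness[OF assms(2-5)] assms(1,2)
    unfolding constant_width_def by simp
  ultimately show False
    by (simp add: lune_thickness_def sph_dist_def)
qed

lemma self_polar_imp_constant_width:
  fixes W :: "'b::euclidean_space set"
  assumes "closed W" and self_polar: "sph_polar W = W"
  shows "constant_width W (pi / 2)"
  unfolding constant_width_def
proof (intro allI impI antisym)
  have W_sphere: "W \<subseteq> sphere 0 1"
    using self_polar sph_polar_subset_sphere by blast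
  note supp = supports_iff[OF assms(1) W_sphere, unfolded self_polar]
  fix P assume "supports P W"
  then obtain X where P: "P \<in> W" and X: "X \<in> W" "P \<bullet> X = 0"
    using supp by blast
  have X_supp: "supports X W"
    using supp X P by (auto simp: inner_commute)
  have "X \<noteq> P" and "X \<noteq> - P"
    using X P W_sphere by (auto simp: dot_square_norm)
  note other = X_supp this
  show "sph_width P W \<le> pi / 2"
    using sph_width_le_lune_thickness[OF \<open>supports P W\<close> other] X(2)
    by (simp add: lune_thickness_def sph_dist_def)
  have "\<And>R. supports R W \<Longrightarrow> 0 \<le> P \<bullet> R"
    using supp P self_polar by (metis mem_sph_polar)
  then show "pi / 2 \<le> sph_width P W"
    using sph_width_ge[OF \<open>supports P W\<close> other, of 0] by simp
qed

lemma compact_inner_pos_perturb: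
  fixes W :: "'b::euclidean_space set"
  assumes "compact W" and "W \<subseteq> sphere 0 1" and "\<And>X. X \<in> W \<Longrightarrow> 0 < a \<bullet> X"
  obtains \<eta> where "0 < \<eta>" and "\<And>t X. 0 \<le> t \<Longrightarrow> t \<le> \<eta> \<Longrightarrow> X \<in> W \<Longrightarrow> 0 \<le> (a - t *\<^sub>R d) \<bullet> X"
proof (cases "W = {}")
  case True
  then show ?thesis using that[of 1] by simp
next
  case False
  have "continuous_on W (\<lambda>X. a \<bullet> X)"
    by (intro continuous_intros)
  then obtain X\<^sub>0 where X\<^sub>0: "X\<^sub>0 \<in> W" "\<And>X. X \<in> W \<Longrightarrow> a \<bullet> X\<^sub>0 \<le> a \<bullet> X"
    using continuous_attains_inf[OF assms(1) False] by blast
  have d_pos: "0 < norm d + 1"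
    by (simp add: add_nonneg_pos)
  define \<eta> where "\<eta> = (a \<bullet> X\<^sub>0) / (norm d + 1)"
  have "0 < \<eta>"
    unfolding \<eta>_def using assms(3)[OF X\<^sub>0(1)] d_pos by simp
  moreover have "0 \<le> (a - t *\<^sub>R d) \<bullet> X" if "0 \<le> t" "t \<le> \<eta>" "X \<in> W" for t X
  proof -
    have "d \<bullet> X \<le> norm d"
      using that(3) assms(2) Cauchy_Schwarz_ineq2[of d X] by auto
    then have "t * (d \<bullet> X) \<le> t * norm d"
      using that(1) by (rule mult_left_mono)
    also have "\<dots> \<le> \<eta> * norm d"
      using that(2) by (rule mult_right_mono) simp
    also have "\<dots> < a \<bullet> X\<^sub>0"
      using assms(3)[OF X\<^sub>0(1)] d_pos by (simp add: \<eta>_def field_simps)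
    also have "\<dots> \<le> a \<bullet> X"
      using X\<^sub>0(2)[OF that(3)] .
    finally show ?thesis
      by (simp add: inner_diff_left)
  qed
  ultimately show ?thesis
    using that by blast
qed

text \<open>The largest s for which W stays in the hemisphere of u - s d: there the hemisphere
  supports W.\<close>

lemma sweep_to_support:
  fixes W :: "'b::euclidean_space set"
  assumes "compact W" and "W \<subseteq> sphere 0 1" and "\<And>X. X \<in> W \<Longrightarrow> 0 \<le> u \<bullet> X"
    and "X\<^sub>0 \<in> W" and "(u - s\<^sub>0 *\<^sub>R d) \<bullet> X\<^sub>0 < 0" and "0 \<le> s\<^sub>0"
  obtains s where "0 \<le> s" and "s < s\<^sub>0"
    and "\<And>X. X \<in> W \<Longrightarrow> 0 \<le> (u - s *\<^sub>R d) \<bullet> X" and "\<exists>X\<in>W. (u - s *\<^sub>R d) \<bullet> X = 0"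
proof -
  define A where "A = {0..s\<^sub>0} \<inter> (\<Inter>X\<in>W. {s. 0 \<le> (u - s *\<^sub>R d) \<bullet> X})"
  have "closed (\<Inter>X\<in>W. {s::real. 0 \<le> (u - s *\<^sub>R d) \<bullet> X})"
    by (intro closed_INT ballI closed_Collect_le continuous_intros)
  hence "compact A"
    unfolding A_def by (intro compact_Int_closed) auto
  moreover have "A \<noteq> {}"
    using assms(3,6) by (auto simp: A_def)
  ultimately obtain s where s: "s \<in> A" and s_max: "\<And>t. t \<in> A \<Longrightarrow> t \<le> s"
    by (metis compact_attains_sup)
  have nonneg: "\<And>X. X \<in> W \<Longrightarrow> 0 \<le> (u - s *\<^sub>R d) \<bullet> X"
    using s by (simp add: A_def)
  have "s \<noteq> s\<^sub>0"
    using nonneg[OF assms(4)] assms(5) by auto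
  with s have s_bounds: "0 \<le> s" "s < s\<^sub>0"
    by (auto simp: A_def)
  have "\<exists>X\<in>W. (u - s *\<^sub>R d) \<bullet> X = 0"
  proof (rule ccontr)
    assume "\<not> ?thesis"
    with nonneg have "\<And>X. X \<in> W \<Longrightarrow> 0 < (u - s *\<^sub>R d) \<bullet> X"
      by force
    then obtain \<eta> where \<eta>: "0 < \<eta>"
      and perturb: "\<And>t X. 0 \<le> t \<Longrightarrow> t \<le> \<eta> \<Longrightarrow> X \<in> W \<Longrightarrow> 0 \<le> (u - s *\<^sub>R d - t *\<^sub>R d) \<bullet> X"
      using compact_inner_pos_perturb[OF assms(1,2)] by metis
    define t where "t = min \<eta> (s\<^sub>0 - s)"
    have "s + t \<in> A"
      using perturb[of t] \<eta> s_bounds by (auto simp: A_def t_def algebra_simps)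
    moreover have "0 < t"
      using \<eta> s_bounds by (simp add: t_def)
    ultimately show False
      using s_max by fastforce
  qed
  with s_bounds nonneg show ?thesis
    using that by blast
qed

lemma supports_sgn:
  fixes W :: "'b::euclidean_space set"
  assumes "closed W" and "W \<subseteq> sphere 0 1" and "v \<noteq> 0"
    and "\<And>X. X \<in> W \<Longrightarrow> 0 \<le> v \<bullet> X" and "\<exists>X\<in>W. v \<bullet> X = 0"
  shows "supports (sgn v) W"
  using assms by (auto simp: supports_iff mem_sph_polar norm_sgn sgn_div_norm)

locale centred_polar_body =
  fixes W :: "'b::euclidean_space set" and E :: 'b
  assumes bipolar: "sph_polar (sph_polar W) = W"
    and centre_in: "E \<in> W"
    and inner_centre_pos: "\<And>X. X \<in> W \<Longrightarrow> 0 < E \<bullet> X"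
    and polar_inner_centre_pos: "\<And>Q. Q \<in> sph_polar W \<Longrightarrow> 0 < Q \<bullet> E"
begin

lemma W_subset_sphere: "W \<subseteq> sphere 0 1"
  using bipolar sph_polar_subset_sphere by blast

lemma compact_W: "compact W"
  using bipolar compact_sph_polar by metis

lemma supports_iff_polar: "supports P W \<longleftrightarrow> P \<in> sph_polar W \<and> (\<exists>X\<in>W. P \<bullet> X = 0)"
  using supports_iff[OF compact_imp_closed[OF compact_W] W_subset_sphere] .

lemma centre_in_polar: "E \<in> sph_polar W"
  using centre_in W_subset_sphere inner_centre_pos by (auto simp: mem_sph_polar less_imp_le)

lemma exists_support_inner_neg:
  assumes u: "u \<in> sph_polar W" and n: "n \<in> sph_polar W" and "u \<bullet> n < 0"
  obtains u' where "supports u' W" and "u' \<bullet> n < 0"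
proof -
  have uE: "0 < u \<bullet> E" and nE: "0 < n \<bullet> E"
    using u n polar_inner_centre_pos by auto
  define s\<^sub>0 where "s\<^sub>0 = u \<bullet> E / (n \<bullet> E) + 1"
  have "(u - s\<^sub>0 *\<^sub>R n) \<bullet> E = - (n \<bullet> E)"
    using nE by (simp add: s\<^sub>0_def inner_diff_left field_simps)
  hence "(u - s\<^sub>0 *\<^sub>R n) \<bullet> E < 0"
    using nE by simp
  moreover have "0 \<le> s\<^sub>0"
    using uE nE by (simp add: s\<^sub>0_def add_nonneg_nonneg)
  ultimately obtain s where s: "0 \<le> s" and nonneg: "\<And>X. X \<in> W \<Longrightarrow> 0 \<le> (u - s *\<^sub>R n) \<bullet> X"
    and zero: "\<exists>X\<in>W. (u - s *\<^sub>R n) \<bullet> X = 0"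
    using sweep_to_support[OF compact_W W_subset_sphere _ centre_in] u
    by (metis mem_sph_polar)
  have "n \<bullet> n = 1"
    using n by (simp add: mem_sph_polar dot_square_norm)
  hence neg: "(u - s *\<^sub>R n) \<bullet> n < 0"
    using s \<open>u \<bullet> n < 0\<close> by (simp add: inner_diff_left)
  hence "u - s *\<^sub>R n \<noteq> 0"
    by auto
  hence "supports (sgn (u - s *\<^sub>R n)) W"
    using supports_sgn[OF compact_imp_closed[OF compact_W] W_subset_sphere] nonneg zero by blast
  moreover have "sgn (u - s *\<^sub>R n) \<bullet> n < 0"
    using neg \<open>u - s *\<^sub>R n \<noteq> 0\<close> by (simp add: sgn_div_norm mult_less_0_iff)
  ultimately show ?thesis
    using that by blast
qed

lemma constant_width_imp_polar_inner_nonneg: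
  assumes cw: "constant_width W (pi / 2)" and Q: "Q \<in> sph_polar W" and R: "R \<in> sph_polar W"
  shows "0 \<le> Q \<bullet> R"
proof (rule ccontr)
  assume "\<not> 0 \<le> Q \<bullet> R"
  then obtain u where u: "supports u W" "u \<bullet> R < 0"
    using exists_support_inner_neg[OF Q R] by auto
  have u_polar: "u \<in> sph_polar W"
    using u(1) supports_iff_polar by blast
  have "R \<bullet> u < 0"
    using u(2) by (simp add: inner_commute)
  then obtain v where v: "supports v W" "v \<bullet> u < 0"
    using exists_support_inner_neg[OF R u_polar] by auto
  have "v \<noteq> u"
    using v(2) inner_ge_zero[of u] by (metis not_le)
  moreover have "v \<noteq> - u"
  proof
    assume "v = - u"
    then have "0 < (- u) \<bullet> E"
      using v(1) supports_iff_polar polar_inner_centre_pos by blast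
    with polar_inner_centre_pos[OF u_polar] show False
      by simp
  qed
  ultimately have "0 \<le> u \<bullet> v"
    using constant_width_half_pi_imp_inner_nonneg[OF cw u(1) v(1)] by blast
  with v(2) show False
    by (simp add: inner_commute)
qed

lemma constant_width_imp_polar_subset:
  assumes "constant_width W (pi / 2)"
  shows "sph_polar W \<subseteq> W"
proof -
  have "sph_polar W \<subseteq> sph_polar (sph_polar W)"
    using constant_width_imp_polar_inner_nonneg[OF assms]
    by (auto simp: mem_sph_polar)
  then show ?thesis
    using bipolar by simp
qed

lemma exists_other_support:
  assumes "supports P W"
  obtains Q where "supports Q W" and "Q \<noteq> P" and "Q \<noteq> - P"
proof -
  obtain X\<^sub>1 where P: "P \<in> sph_polar W" and X\<^sub>1: "X\<^sub>1 \<in> W" "P \<bullet> X\<^sub>1 = 0"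
    using assms supports_iff_polar by blast
  have PE: "0 < P \<bullet> E"
    using P polar_inner_centre_pos by blast
  have EE: "E \<bullet> E = 1"
    using centre_in W_subset_sphere by (auto simp: dot_square_norm)
  define s\<^sub>0 where "s\<^sub>0 = 1 / (P \<bullet> E) + 1"
  have "(E - s\<^sub>0 *\<^sub>R P) \<bullet> E = - (P \<bullet> E)"
    using PE EE by (simp add: s\<^sub>0_def inner_diff_left field_simps)
  hence "(E - s\<^sub>0 *\<^sub>R P) \<bullet> E < 0"
    using PE by simp
  moreover have "0 \<le> s\<^sub>0"
    using PE by (simp add: s\<^sub>0_def add_nonneg_nonneg)
  ultimately obtain s where nonneg: "\<And>X. X \<in> W \<Longrightarrow> 0 \<le> (E - s *\<^sub>R P) \<bullet> X"
    and zero: "\<exists>X\<in>W. (E - s *\<^sub>R P) \<bullet> X = 0"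
    using sweep_to_support[OF compact_W W_subset_sphere _ centre_in] centre_in_polar
    by (metis mem_sph_polar)
  have pos: "0 < (E - s *\<^sub>R P) \<bullet> X\<^sub>1"
    using X\<^sub>1 inner_centre_pos by (simp add: inner_diff_left)
  hence "E - s *\<^sub>R P \<noteq> 0"
    by auto
  hence "supports (sgn (E - s *\<^sub>R P)) W"
    using supports_sgn[OF compact_imp_closed[OF compact_W] W_subset_sphere] nonneg zero by blast
  moreover have "0 < sgn (E - s *\<^sub>R P) \<bullet> X\<^sub>1"
    using pos \<open>E - s *\<^sub>R P \<noteq> 0\<close> by (simp add: sgn_div_norm zero_less_mult_iff)
  ultimately show ?thesis
    using that X\<^sub>1(2) by force
qed

lemma exists_support_pos_on_polar:
  assumes Y: "Y \<in> W" "Y \<notin> sph_polar W"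
  obtains P where "supports P W" and "\<And>Q. Q \<in> sph_polar W \<Longrightarrow> 0 < P \<bullet> Q"
proof -
  obtain X\<^sub>0 where X\<^sub>0: "X\<^sub>0 \<in> W" "(E - 1 *\<^sub>R (E - Y)) \<bullet> X\<^sub>0 < 0"
    using Y W_subset_sphere by (auto simp: mem_sph_polar not_le)
  obtain s where s: "0 \<le> s" "s < 1" and nonneg: "\<And>X. X \<in> W \<Longrightarrow> 0 \<le> (E - s *\<^sub>R (E - Y)) \<bullet> X"
    and zero: "\<exists>X\<in>W. (E - s *\<^sub>R (E - Y)) \<bullet> X = 0"
    using sweep_to_support[OF compact_W W_subset_sphere _ X\<^sub>0 zero_le_one] centre_in_polar
    by (metis mem_sph_polar)
  define v where "v = E - s *\<^sub>R (E - Y)"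
  have v_pos: "0 < v \<bullet> Q" if Q: "Q \<in> sph_polar W" for Q
  proof -
    have "v \<bullet> Q = (1 - s) * (Q \<bullet> E) + s * (Q \<bullet> Y)"
      by (simp add: v_def inner_diff_left inner_commute algebra_simps)
    moreover have "0 < (1 - s) * (Q \<bullet> E)"
      using s polar_inner_centre_pos[OF Q] by simp
    moreover have "0 \<le> s * (Q \<bullet> Y)"
      using s Q Y(1) by (simp add: mem_sph_polar)
    ultimately show ?thesis
      by linarith
  qed
  hence "v \<noteq> 0"
    using centre_in_polar by force
  hence "supports (sgn v) W"
    using supports_sgn[OF compact_imp_closed[OF compact_W] W_subset_sphere] nonneg zero
    unfolding v_def by blast
  moreover have "0 < sgn v \<bullet> Q" if "Q \<in> sph_polar W" for Q
    using v_pos[OF that] \<open>v \<noteq> 0\<close> by (simp add: sgn_div_norm zero_less_mult_iff)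
  ultimately show ?thesis
    using that by blast
qed

lemma sph_width_gt_if_pos_on_polar:
  assumes P: "supports P W" and pos: "\<And>Q. Q \<in> sph_polar W \<Longrightarrow> 0 < P \<bullet> Q"
  shows "pi / 2 < sph_width P W"
proof -
  have "continuous_on (sph_polar W) (\<lambda>Q. P \<bullet> Q)"
    by (intro continuous_intros)
  then obtain Q\<^sub>0 where Q\<^sub>0: "Q\<^sub>0 \<in> sph_polar W" and min: "\<And>Q. Q \<in> sph_polar W \<Longrightarrow> P \<bullet> Q\<^sub>0 \<le> P \<bullet> Q"
    using continuous_attains_inf[OF compact_sph_polar] centre_in_polar by blast
  have "P \<bullet> Q\<^sub>0 \<le> 1"
    using P Q\<^sub>0 inner_unit_bounds by (auto simp: supports_def mem_sph_polar)
  hence arccos_lt: "arccos (P \<bullet> Q\<^sub>0) < arccos 0"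
    using pos[OF Q\<^sub>0] by (intro arccos_less_arccos) auto
  \<comment> \<open>Without a second supporting pole the infimum defining the width would be taken over
    the empty set.\<close>
  obtain Q where "supports Q W" "Q \<noteq> P" "Q \<noteq> - P"
    using exists_other_support[OF P] .
  then have "pi - arccos (P \<bullet> Q\<^sub>0) \<le> sph_width P W"
    using pos[OF Q\<^sub>0] min supports_iff_polar by (intro sph_width_ge[OF P]) auto
  with arccos_lt show ?thesis
    by simp
qed

lemma constant_width_imp_subset_polar:
  assumes cw: "constant_width W (pi / 2)"
  shows "W \<subseteq> sph_polar W"
proof
  fix Y assume "Y \<in> W"
  show "Y \<in> sph_polar W"
  proof (rule ccontr)
    assume "Y \<notin> sph_polar W"
    then obtain P where "supports P W" and "\<And>Q. Q \<in> sph_polar W \<Longrightarrow> 0 < P \<bullet> Q"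
      using exists_support_pos_on_polar \<open>Y \<in> W\<close> by blast
    then have "pi / 2 < sph_width P W"
      by (rule sph_width_gt_if_pos_on_polar)
    with cw \<open>supports P W\<close> show False
      by (simp add: constant_width_def)
  qed
qed

theorem self_polar_iff_constant_width:
  "sph_polar W = W \<longleftrightarrow> constant_width W (pi / 2)"
  using self_polar_imp_constant_width[OF compact_imp_closed[OF compact_W]]
    constant_width_imp_polar_subset constant_width_imp_subset_polar
  by blast

end

lemma mem_wulff_lift_iff:
  "P \<in> alpha_N_inv_image (Id_lift ` wulff_shape \<gamma>) \<longleftrightarrow>
     P \<in> sphere 0 1 \<and> 0 < snd P \<and> (\<forall>\<theta>\<in>sphere 0 1. fst P \<bullet> \<theta> \<le> snd P * \<gamma> \<theta>)"
proof -
  obtain x t where P: "P = (x, t)"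
    by fastforce
  have "alpha_N P \<in> Id_lift ` wulff_shape \<gamma> \<longleftrightarrow> (\<forall>\<theta>\<in>sphere 0 1. (x /\<^sub>R t) \<bullet> \<theta> \<le> \<gamma> \<theta>)"
    by (auto simp: P alpha_N_def Id_lift_def wulff_shape_def divide_inverse_commute)
  moreover have "(x /\<^sub>R t) \<bullet> \<theta> \<le> \<gamma> \<theta> \<longleftrightarrow> x \<bullet> \<theta> \<le> t * \<gamma> \<theta>" if "0 < t" for \<theta>
    using that by (simp add: field_simps)
  ultimately show ?thesis
    by (auto simp: alpha_N_inv_image_def P)
qed

lemma snd_pos_of_wulff_cone:
  fixes P :: "'a::euclidean_space \<times> real"
  assumes "P \<in> sphere 0 1" and "\<And>\<theta>. \<theta> \<in> sphere 0 1 \<Longrightarrow> 0 < \<gamma> \<theta>"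
    and cone: "\<And>\<theta>. \<theta> \<in> sphere 0 1 \<Longrightarrow> fst P \<bullet> \<theta> \<le> snd P * \<gamma> \<theta>"
  shows "0 < snd P"
proof (rule ccontr)
  assume "\<not> 0 < snd P"
  obtain x t where P: "P = (x, t)" and t: "t \<le> 0"
    using \<open>\<not> 0 < snd P\<close> by (metis not_less prod.collapse)
  show False
  proof (cases "x = 0")
    case True
    obtain \<theta> :: 'a where \<theta>: "\<theta> \<in> sphere 0 1"
      using vector_choose_size[OF zero_le_one] by (metis mem_sphere_0)
    have "t = -1"
      using assms(1) t True by (simp add: P norm_Pair)
    then show False
      using cone[OF \<theta>] assms(2)[OF \<theta>] True by (simp add: P)
  next
    case False
    have "sgn x \<in> sphere 0 1"
      using False by (simp add: norm_sgn)
    moreover have "x \<bullet> sgn x = norm x"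
      using False by (simp add: sgn_div_norm dot_square_norm power2_eq_square)
    ultimately have "norm x \<le> t * \<gamma> (sgn x)" and "0 < \<gamma> (sgn x)"
      using cone assms(2) by (force simp: P)+
    moreover have "t * \<gamma> (sgn x) \<le> 0"
      using t \<open>0 < \<gamma> (sgn x)\<close> by (simp add: mult_nonpos_nonneg)
    ultimately show False
      using False by (metis order.trans norm_le_zero_iff)
  qed
qed

lemma wulff_lift_eq_sph_polar:
  fixes \<gamma> :: "'a::euclidean_space \<Rightarrow> real"
  assumes "\<And>\<theta>. \<theta> \<in> sphere 0 1 \<Longrightarrow> 0 < \<gamma> \<theta>"
  shows "alpha_N_inv_image (Id_lift ` wulff_shape \<gamma>) = sph_polar ((\<lambda>\<theta>. sgn (- \<theta>, \<gamma> \<theta>)) ` sphere 0 1)"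
proof -
  have "0 \<le> P \<bullet> sgn (- \<theta>, \<gamma> \<theta>) \<longleftrightarrow> fst P \<bullet> \<theta> \<le> snd P * \<gamma> \<theta>" if "\<theta> \<in> sphere 0 1" for P \<theta>
  proof -
    have "(- \<theta>, \<gamma> \<theta>) \<noteq> 0"
      using assms[OF that] by (auto simp: zero_prod_def)
    then show ?thesis
      by (cases P) (simp add: sgn_div_norm zero_le_mult_iff inner_commute mult.commute)
  qed
  then have "P \<in> sph_polar ((\<lambda>\<theta>. sgn (- \<theta>, \<gamma> \<theta>)) ` sphere 0 1) \<longleftrightarrow>
      P \<in> sphere 0 1 \<and> (\<forall>\<theta>\<in>sphere 0 1. fst P \<bullet> \<theta> \<le> snd P * \<gamma> \<theta>)" for P
    by (auto simp: mem_sph_polar)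
  moreover have "0 < snd P"
    if "P \<in> sphere 0 1" and "\<forall>\<theta>\<in>sphere 0 1. fst P \<bullet> \<theta> \<le> snd P * \<gamma> \<theta>" for P
    using snd_pos_of_wulff_cone[of P \<gamma>] that assms by blast
  ultimately show ?thesis
    by (auto simp: mem_wulff_lift_iff)
qed

lemma sgn_lift_mem_wulff_lift:
  fixes \<gamma> :: "'a::euclidean_space \<Rightarrow> real"
  assumes "\<And>\<theta>. \<theta> \<in> sphere 0 1 \<Longrightarrow> m \<le> \<gamma> \<theta>" and "norm x \<le> m"
  shows "sgn (x, 1) \<in> alpha_N_inv_image (Id_lift ` wulff_shape \<gamma>)"
proof -
  have r: "0 < norm (x, 1::real)"
    by (simp add: zero_prod_def)
  have "x \<bullet> \<theta> \<le> \<gamma> \<theta>" if "\<theta> \<in> sphere 0 1" for \<theta>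
    using Cauchy_Schwarz_ineq2[of x \<theta>] that assms(1)[OF that] assms(2) by auto
  moreover have "sgn (x, 1::real) \<in> sphere 0 1"
    using r by (simp add: norm_sgn)
  ultimately show ?thesis
    using r by (auto simp: mem_wulff_lift_iff sgn_div_norm divide_right_mono)
qed

lemma polar_snd_pos_of_cap:
  fixes W :: "('a::euclidean_space \<times> real) set"
  assumes "0 < m" and cap: "\<And>x. norm x \<le> m \<Longrightarrow> sgn (x, 1) \<in> W" and Q: "Q \<in> sph_polar W"
  shows "0 < snd Q"
proof -
  obtain q \<tau> where Q_eq: "Q = (q, \<tau>)"
    by fastforce
  have lift: "0 \<le> \<tau> + q \<bullet> x" if "norm x \<le> m" for x
  proof -
    have "0 \<le> Q \<bullet> sgn (x, 1)"
      using Q cap[OF that] by (simp add: mem_sph_polar)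
    moreover have r: "0 < norm (x, 1::real)"
      by (simp add: zero_prod_def)
    moreover have "Q \<bullet> sgn (x, 1) = (\<tau> + q \<bullet> x) / norm (x, 1::real)"
      using r by (simp add: Q_eq sgn_div_norm field_simps)
    ultimately show ?thesis
      by (simp add: zero_le_divide_iff)
  qed
  show ?thesis
  proof (cases "q = 0")
    case True
    then have "\<bar>\<tau>\<bar> = 1"
      using Q by (simp add: mem_sph_polar Q_eq norm_Pair)
    with lift[of 0] \<open>0 < m\<close> show ?thesis
      by (simp add: Q_eq)
  next
    case False
    have "0 \<le> \<tau> + q \<bullet> (- (m / norm q) *\<^sub>R q)"
      using False \<open>0 < m\<close> by (intro lift) simp
    then have "m * norm q \<le> \<tau>"
      using False by (simp add: dot_square_norm power2_eq_square)
    moreover have "0 < m * norm q"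
      using False \<open>0 < m\<close> by simp
    ultimately show ?thesis
      by (simp add: Q_eq)
  qed
qed

lemma wulff_lift_centred_polar_body:
  fixes \<gamma> :: "'a::euclidean_space \<Rightarrow> real"
  assumes "continuous_on (sphere 0 1) \<gamma>" and "\<And>\<theta>. \<theta> \<in> sphere 0 1 \<Longrightarrow> 0 < \<gamma> \<theta>"
  shows "centred_polar_body (alpha_N_inv_image (Id_lift ` wulff_shape \<gamma>)) (0, 1)"
proof -
  define W where "W = alpha_N_inv_image (Id_lift ` wulff_shape \<gamma>)"
  obtain \<theta>\<^sub>0 where "\<theta>\<^sub>0 \<in> sphere 0 1" and min: "\<And>\<theta>. \<theta> \<in> sphere 0 1 \<Longrightarrow> \<gamma> \<theta>\<^sub>0 \<le> \<gamma> \<theta>"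
    using continuous_attains_inf[OF compact_sphere _ assms(1)] by force
  then have m: "0 < \<gamma> \<theta>\<^sub>0"
    using assms(2) by blast
  have cap: "sgn (x, 1) \<in> W" if "norm x \<le> \<gamma> \<theta>\<^sub>0" for x
    using sgn_lift_mem_wulff_lift[where m = "\<gamma> \<theta>\<^sub>0"] min that unfolding W_def by blast
  show ?thesis
    unfolding W_def[symmetric]
  proof
    have "(- \<theta>, \<gamma> \<theta>) \<noteq> 0" if "\<theta> \<in> sphere 0 1" for \<theta>
      using assms(2)[OF that] by (simp add: zero_prod_def)
    then have "(\<lambda>\<theta>. sgn (- \<theta>, \<gamma> \<theta>)) ` sphere 0 1 \<subseteq> sphere 0 1"
      by (auto simp: norm_sgn)
    moreover have "W = sph_polar ((\<lambda>\<theta>. sgn (- \<theta>, \<gamma> \<theta>)) ` sphere 0 1)"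
      unfolding W_def using assms(2) by (rule wulff_lift_eq_sph_polar)
    ultimately show "sph_polar (sph_polar W) = W"
      using sph_polar_sph_polar_sph_polar by metis
    show "(0, 1) \<in> W"
      using cap[of 0] m by (simp add: sgn_div_norm)
    show "0 < (0, 1) \<bullet> X" if "X \<in> W" for X
      using that by (cases X) (simp add: W_def mem_wulff_lift_iff)
    show "0 < Q \<bullet> (0, 1)" if "Q \<in> sph_polar W" for Q
      using polar_snd_pos_of_cap[OF m cap that] by (cases Q) simp
  qed
qed

theorem proposition3p1:
  fixes \<gamma> :: "'a::euclidean_space \<Rightarrow> real"
  assumes "continuous_on (sphere 0 1) \<gamma>"
    and "\<And>\<theta>. \<theta> \<in> sphere 0 1 \<Longrightarrow> \<gamma> \<theta> > 0"
  defines "W \<equiv> alpha_N_inv_image (Id_lift ` wulff_shape \<gamma>)"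
  shows "W = sph_polar W \<longleftrightarrow> constant_width W (pi / 2)"
proof -
  have "centred_polar_body W (0, 1)"
    unfolding W_def using assms(1,2) by (rule wulff_lift_centred_polar_body)
  then show ?thesis
    using centred_polar_body.self_polar_iff_constant_width by (metis eq_commute)
qed

end
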